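(* Let $m,k\in\mathbb{N}$ and let $\beta\in\mathbb{C}$ with $\beta\notin\mathbb{Z}_0^-$ and $\frac{1+\beta}{2}-m\notin\mathbb{Z}_0^-$. Then \[ {}_3F_2\left[\begin{array}{r} -2m,\ \beta,\ -m-k-\tfrac{1}{2};\\ -2m-2k-1,\ \tfrac{1+\beta}{2}-m;\end{array}1\right]_{2m}=\frac{\left(\frac{1}{2}\right)_m\left(\frac{2+\beta+2k}{2}\right)_m}{\left(\frac{1-\beta}{2}\right)_m\left(1+k\right)_m}. \]
   Context: $\mathbb{N}=\{1,2,3,\dots\}$, $\mathbb{Z}_0^-=\{0,-1,-2,\dots\}$. For $a\in\mathbb{C}$ and $n\in\mathbb{N}_0$, $(a)_0=1$ and $(a)_n=a(a+1)\cdots(a+n-1)$ (Pochhammer symbol). For $N\in\mathbb{N}_0$, the truncated series is ${}_3F_2\left[\begin{array}{r} a_1,a_2,a_3;\\ b_1,b_2;\end{array}z\right]_N=\sum_{n=0}^{N}\frac{(a_1)_n(a_2)_n(a_3)_n}{(b_1)_n(b_2)_n}\frac{z^n}{n!}$ (the sum of the first $N+1$ terms), defined whenever $(b_1)_n(b_2)_n\neq0$ for $0\le n\le N$. *)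

theory Defs
  imports Complex_Main
begin

definition hyp3F2_trunc ::
  "complex \<Rightarrow> complex \<Rightarrow> complex \<Rightarrow> complex \<Rightarrow> complex \<Rightarrow> complex \<Rightarrow> nat \<Rightarrow> complex" where
  "hyp3F2_trunc a1 a2 a3 b1 b2 z N =
     (\<Sum>n = 0..N. pochhammer a1 n * pochhammer a2 n * pochhammer a3 n
        / (pochhammer b1 n * pochhammer b2 n) * z ^ n / of_nat (fact n))"

definition nonpos_ints_c :: "complex set" where
  "nonpos_ints_c = {z. \<exists>n::nat. z = - of_nat n}"

end

theory Submission
  imports Defs
begin

(* Creative telescoping in m (Zeilberger). Let t_m(n) be the n-th term of the series, S_m its sum
   and R_m the right-hand side. In Watson's notation a = -2m-2, b = \<beta>, c = -m-k-3/2, the rational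
   certificate G(n) = n (2n + a + 2c) / (a (n + 2c)) * t_{m+1}(n) satisfies
     t_{m+1}(n) - (R_{m+1} / R_m) t_m(n) = G(n+1) - G(n),
   which after dividing by t_{m+1}(n) and clearing denominators is a polynomial identity.
   Summing over 0 \<le> n \<le> 2m+2, where G(0) = 0 and t_{m+1}(2m+3) = 0, gives
   S_{m+1} = (R_{m+1} / R_m) S_m, and induction from S_0 = R_0 = 1 finishes the proof.
   The hypotheses k \<ge> 1 and (1+\<beta>)/2 - m \<notin> Z_0^- keep all denominators involved nonzero. *)

definition hyp3F2_term ::
  "complex \<Rightarrow> complex \<Rightarrow> complex \<Rightarrow> complex \<Rightarrow> complex \<Rightarrow> complex \<Rightarrow> nat \<Rightarrow> complex" where
  "hyp3F2_term a1 a2 a3 b1 b2 z n =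
     pochhammer a1 n * pochhammer a2 n * pochhammer a3 n
        / (pochhammer b1 n * pochhammer b2 n) * z ^ n / of_nat (fact n)"

lemma hyp3F2_trunc_eq_sum_term:
  "hyp3F2_trunc a1 a2 a3 b1 b2 z N = (\<Sum>n = 0..N. hyp3F2_term a1 a2 a3 b1 b2 z n)"
  unfolding hyp3F2_trunc_def hyp3F2_term_def ..

lemma hyp3F2_term_Suc:
  "hyp3F2_term a1 a2 a3 b1 b2 z (Suc n) = hyp3F2_term a1 a2 a3 b1 b2 z n *
     ((a1 + of_nat n) * (a2 + of_nat n) * (a3 + of_nat n) * z
      / ((b1 + of_nat n) * (b2 + of_nat n) * (of_nat n + 1)))"
proof -
  have "(of_nat (fact (Suc n)) :: complex) = of_nat (fact n) * (of_nat n + 1)"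
    by (simp add: algebra_simps)
  then show ?thesis
    unfolding hyp3F2_term_def pochhammer_Suc power_Suc
    by (simp only: divide_inverse inverse_mult_distrib ac_simps)
qed

lemma pochhammer_add_one:
  fixes a :: "'a :: field"
  assumes "a \<noteq> 0"
  shows "pochhammer (a + 1) n = pochhammer a n * (a + of_nat n) / a"
proof -
  have "a * pochhammer (a + 1) n = pochhammer a n * (a + of_nat n)"
    by (metis pochhammer_rec pochhammer_Suc)
  with assms show ?thesis
    by (simp add: field_simps)
qed

lemma pochhammer_add_two:
  fixes a :: "'a :: field"
  assumes "a \<noteq> 0" "a + 1 \<noteq> 0"
  shows "pochhammer (a + 2) n = pochhammer a n * (a + of_nat n) * (a + 1 + of_nat n) / (a * (a + 1))"
proof -
  have "pochhammer (a + 2) n = pochhammer ((a + 1) + 1) n"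
    by (simp add: add.assoc)
  also have "\<dots> = pochhammer a n * (a + of_nat n) / a * (a + 1 + of_nat n) / (a + 1)"
    unfolding pochhammer_add_one[OF assms(2)] pochhammer_add_one[OF assms(1)] ..
  also have "\<dots> = pochhammer a n * (a + of_nat n) * (a + 1 + of_nat n) / (a * (a + 1))"
    by simp
  finally show ?thesis .
qed

lemma hyp3F2_term_shift:
  assumes "a1 \<noteq> 0" "a1 + 1 \<noteq> 0" "a3 \<noteq> 0" "b1 \<noteq> 0" "b1 + 1 \<noteq> 0" "b2 \<noteq> 0"
  shows "hyp3F2_term (a1 + 2) a2 (a3 + 1) (b1 + 2) (b2 + 1) z n = hyp3F2_term a1 a2 a3 b1 b2 z n *
     ((a1 + of_nat n) * (a1 + 1 + of_nat n) * (a3 + of_nat n) * b1 * (b1 + 1) * b2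
      / (a1 * (a1 + 1) * a3 * (b1 + of_nat n) * (b1 + 1 + of_nat n) * (b2 + of_nat n)))"
  unfolding hyp3F2_term_def pochhammer_add_two[OF assms(1,2)] pochhammer_add_two[OF assms(4,5)]
    pochhammer_add_one[OF assms(3)] pochhammer_add_one[OF assms(6)]
  by (simp only: divide_inverse inverse_mult_distrib inverse_inverse_eq ac_simps)

lemma hyp3F2_term_eq_0:
  assumes "N < n"
  shows "hyp3F2_term (- of_nat N) a2 a3 b1 b2 z n = 0"
  using assms unfolding hyp3F2_term_def by (simp add: pochhammer_of_nat_eq_0_iff)

lemma notin_nonpos_ints_c_iff: "z \<notin> nonpos_ints_c \<longleftrightarrow> (\<forall>n. z + of_nat n \<noteq> 0)"
  unfolding nonpos_ints_c_def by (auto simp: add_eq_0_iff2)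

lemma notin_nonpos_ints_c_add_one: "z \<notin> nonpos_ints_c \<Longrightarrow> z + 1 \<notin> nonpos_ints_c"
  unfolding notin_nonpos_ints_c_iff by (metis add.assoc add.commute of_nat_Suc)

lemma neg_of_nat_add_of_nat_eq_0_iff: "(- of_nat L + of_nat n :: 'a :: ring_char_0) = 0 \<longleftrightarrow> n = L"
  by (simp add: add_eq_0_iff2 eq_commute[of "of_nat n"])

(* The term of Watson's series 3F2(a, b, c; (a+b+1)/2, 2c; 1). The theorem is the case a = -2m,
   c = -m-k-1/2, where 2c is a negative integer and Watson's summation formula does not apply. *)
definition watson_term :: "complex \<Rightarrow> complex \<Rightarrow> complex \<Rightarrow> nat \<Rightarrow> complex" where
  "watson_term a b c = hyp3F2_term a b c (2 * c) ((a + b + 1) / 2) 1"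

lemma hyp3F2_trunc_eq_sum_watson_term:
  "hyp3F2_trunc a b c (2 * c) ((a + b + 1) / 2) 1 N = (\<Sum>n = 0..N. watson_term a b c n)"
  unfolding hyp3F2_trunc_eq_sum_term watson_term_def ..

lemma watson_term_eq_0: "N < n \<Longrightarrow> watson_term (- of_nat N) b c n = 0"
  unfolding watson_term_def by (rule hyp3F2_term_eq_0)

definition watson_ratio :: "complex \<Rightarrow> complex \<Rightarrow> complex \<Rightarrow> complex" where
  "watson_ratio a b c = - (a + 1) * (b - 1 - 2 * c) / ((a + b + 1) * (2 * c + 1))"

definition watson_certificate :: "complex \<Rightarrow> complex \<Rightarrow> nat \<Rightarrow> complex" where
  "watson_certificate a c n = of_nat n * (2 * of_nat n + a + 2 * c) / (a * (of_nat n + 2 * c))"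

lemma watson_certificate_polynomial_identity:
  fixes a b c v N :: complex
  assumes "a + b + 1 = 2 * v"
  shows "a * ((2 * c + N) * (2 * c + 1 + N) * (v + N))
      + (b - 1 - 2 * c) * ((a + N) * (a + 1 + N) * (c + N))
    = (2 * N + 2 + a + 2 * c) * ((a + N) * (b + N) * (c + N))
      - N * (2 * N + a + 2 * c) * ((2 * c + 1 + N) * (v + N))"
  using assms by algebra

lemma watson_term_Suc:
  "watson_term a b c (Suc n) = watson_term a b c n *
     ((a + of_nat n) * (b + of_nat n) * (c + of_nat n)
      / ((2 * c + of_nat n) * ((a + b + 1) / 2 + of_nat n) * (of_nat n + 1)))"
  unfolding watson_term_def hyp3F2_term_Suc by simp

lemma watson_term_shift:
  fixes a b c :: complex
  defines "v \<equiv> (a + b + 1) / 2"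
  assumes "a \<noteq> 0" "a + 1 \<noteq> 0" "c \<noteq> 0" "2 * c + 1 \<noteq> 0" "v \<noteq> 0"
  shows "watson_term (a + 2) b (c + 1) n = watson_term a b c n *
     ((a + of_nat n) * (a + 1 + of_nat n) * (c + of_nat n) * (2 * c) * (2 * c + 1) * v
      / (a * (a + 1) * c * (2 * c + of_nat n) * (2 * c + 1 + of_nat n) * (v + of_nat n)))"
proof -
  have params: "2 * (c + 1) = 2 * c + 2" "(a + 2 + b + 1) / 2 = v + 1"
    unfolding v_def by (simp_all add: field_simps)
  show ?thesis
    unfolding watson_term_def params v_def[symmetric]
    by (rule hyp3F2_term_shift) (use assms in simp_all)
qed

lemma watson_term_telescoping:
  fixes a b c :: complex
  defines "v \<equiv> (a + b + 1) / 2"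
  assumes "a \<noteq> 0" "a + 1 \<noteq> 0" "c \<noteq> 0" "2 * c + 1 \<noteq> 0" "v \<noteq> 0"
    and "2 * c + of_nat n \<noteq> 0" "2 * c + 1 + of_nat n \<noteq> 0" "v + of_nat n \<noteq> 0"
  shows "watson_term a b c n - watson_ratio a b c * watson_term (a + 2) b (c + 1) n
    = watson_certificate a c (Suc n) * watson_term a b c (Suc n)
      - watson_certificate a c n * watson_term a b c n"
proof -
  define N :: complex where "N = of_nat n"
  define W where "W = watson_term a b c n / (a * ((2 * c + N) * (2 * c + 1 + N) * (v + N)))"
  have nz: "a \<noteq> 0" "a + 1 \<noteq> 0" "c \<noteq> 0" "2 * c \<noteq> 0" "2 * c + 1 \<noteq> 0" "v \<noteq> 0"
    "2 * c + N \<noteq> 0" "2 * c + 1 + N \<noteq> 0" "v + N \<noteq> 0" "N + 1 \<noteq> 0"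
    using assms unfolding N_def
    by (auto simp: add.commute[of _ 1] of_nat_Suc[symmetric] simp del: of_nat_Suc)
  have "2 * (2 * c + 1) \<noteq> 0"
    using nz(5) by (metis mult_eq_0_iff zero_neq_numeral)
  have two_v: "a + b + 1 = 2 * v"
    unfolding v_def by simp
  have term_eq: "watson_term a b c n = W * (a * ((2 * c + N) * (2 * c + 1 + N) * (v + N)))"
    using nz unfolding W_def by simp
  have ratio_eq: "watson_ratio a b c * watson_term (a + 2) b (c + 1) n
      = - (W * ((b - 1 - 2 * c) * ((a + N) * (a + 1 + N) * (c + N))))"
    unfolding watson_term_shift[OF assms(2-6)[unfolded v_def]] v_def[symmetric] N_def[symmetric]
      watson_ratio_def two_v W_def
    using nz \<open>2 * (2 * c + 1) \<noteq> 0\<close>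
    by (simp add: divide_simps ac_simps) (simp add: algebra_simps)
  have certificate_next: "watson_certificate a c (Suc n) * watson_term a b c (Suc n)
      = W * ((2 * N + 2 + a + 2 * c) * ((a + N) * (b + N) * (c + N)))"
    unfolding watson_term_Suc watson_certificate_def W_def of_nat_Suc v_def[symmetric] N_def[symmetric]
    using nz by (simp add: divide_simps ac_simps)
  have certificate_eq: "watson_certificate a c n * watson_term a b c n
      = W * (N * (2 * N + a + 2 * c) * ((2 * c + 1 + N) * (v + N)))"
    unfolding watson_certificate_def W_def N_def[symmetric] using nz by (simp add: divide_simps ac_simps)
  have "watson_term a b c n - watson_ratio a b c * watson_term (a + 2) b (c + 1) n
      = W * (a * ((2 * c + N) * (2 * c + 1 + N) * (v + N))
          + (b - 1 - 2 * c) * ((a + N) * (a + 1 + N) * (c + N)))"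
    unfolding term_eq ratio_eq by (simp only: diff_minus_eq_add distrib_left)
  also have "\<dots> = W * ((2 * N + 2 + a + 2 * c) * ((a + N) * (b + N) * (c + N))
      - N * (2 * N + a + 2 * c) * ((2 * c + 1 + N) * (v + N)))"
    unfolding watson_certificate_polynomial_identity[OF two_v] ..
  also have "\<dots> = watson_certificate a c (Suc n) * watson_term a b c (Suc n)
      - watson_certificate a c n * watson_term a b c n"
    unfolding certificate_next certificate_eq by (simp only: right_diff_distrib)
  finally show ?thesis .
qed

lemma watson_sum_recurrence:
  fixes b c :: complex and m :: nat
  defines "a \<equiv> - of_nat (2 * m + 2) :: complex"
  assumes "c \<noteq> 0" "2 * c + 1 \<noteq> 0"
    and "\<And>n. n \<le> 2 * m + 2 \<Longrightarrow> 2 * c + of_nat n \<noteq> 0 \<and> 2 * c + 1 + of_nat n \<noteq> 0"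
    and "\<And>n. (a + b + 1) / 2 + of_nat n \<noteq> 0"
  shows "(\<Sum>n = 0..2 * m + 2. watson_term a b c n)
    = watson_ratio a b c * (\<Sum>n = 0..2 * m. watson_term (a + 2) b (c + 1) n)"
proof -
  define G where "G n = watson_certificate a c n * watson_term a b c n" for n
  have a_shift: "a + 2 = - of_nat (2 * m)"
    unfolding a_def by simp
  have "a + 1 = - of_nat (2 * m + 1)"
    unfolding a_def by simp
  then have "a \<noteq> 0" "a + 1 \<noteq> 0"
    unfolding a_def by (simp_all only: neg_equal_0_iff_equal of_nat_eq_0_iff)
  then have step:
    "watson_term a b c n - watson_ratio a b c * watson_term (a + 2) b (c + 1) n = G (Suc n) - G n"
    if "n < 2 * m + 3" for n
    unfolding G_def using that assms(2,3) assms(4)[of n] assms(5)[of 0] assms(5)[of n]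
    by (intro watson_term_telescoping) simp_all
  have "(\<Sum>n<2 * m + 3. watson_term a b c n - watson_ratio a b c * watson_term (a + 2) b (c + 1) n)
      = G (2 * m + 3) - G 0"
    using step by (simp add: sum_lessThan_telescope)
  also have "\<dots> = 0"
    using watson_term_eq_0[of "2 * m + 2" "2 * m + 3" b c]
    unfolding G_def a_def watson_certificate_def by simp
  finally have "(\<Sum>n<2 * m + 3. watson_term a b c n)
      = watson_ratio a b c * (\<Sum>n<2 * m + 3. watson_term (a + 2) b (c + 1) n)"
    by (simp add: sum_subtractf sum_distrib_left)
  moreover have "(\<Sum>n<2 * m + 3. watson_term (a + 2) b (c + 1) n)
      = (\<Sum>n = 0..2 * m. watson_term (a + 2) b (c + 1) n)"
    unfolding a_shift using watson_term_eq_0[of "2 * m"] by (intro sum.mono_neutral_right) auto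
  moreover have "{..<2 * m + 3} = {0..2 * m + 2}"
    by auto
  ultimately show ?thesis
    by simp
qed

lemma watson_ratio_neg_even:
  "watson_ratio (- of_nat (2 * m + 2)) \<beta> (- of_nat (Suc m) - of_nat k - 1/2)
    = (1/2 + of_nat m) * ((2 + \<beta> + 2 * of_nat k) / 2 + of_nat m)
      / (((1 - \<beta>) / 2 + of_nat m) * (1 + of_nat k + of_nat m))"
proof -
  have "- (- of_nat (2 * m + 2) + 1) * (\<beta> - 1 - 2 * (- of_nat (Suc m) - of_nat k - 1/2))
      = 4 * ((1/2 + of_nat m) * ((2 + \<beta> + 2 * of_nat k) / 2 + of_nat m))"
    "(- of_nat (2 * m + 2) + \<beta> + 1) * (2 * (- of_nat (Suc m) - of_nat k - 1/2) + 1)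
      = 4 * (((1 - \<beta>) / 2 + of_nat m) * (1 + of_nat k + of_nat m))"
    by (simp_all add: field_simps)
  then show ?thesis
    unfolding watson_ratio_def by simp
qed

lemma watson_sum_closed_form:
  fixes \<beta> :: complex and k m :: nat
  assumes "k \<ge> 1" and "(1 + \<beta>) / 2 - of_nat m \<notin> nonpos_ints_c"
  shows "(\<Sum>n = 0..2 * m. watson_term (- 2 * of_nat m) \<beta> (- of_nat m - of_nat k - 1/2) n)
    = pochhammer (1/2) m * pochhammer ((2 + \<beta> + 2 * of_nat k) / 2) m
      / (pochhammer ((1 - \<beta>) / 2) m * pochhammer (1 + of_nat k) m)"
  using assms(2)
proof (induction m)
  case 0
  then show ?case
    by (simp add: watson_term_def hyp3F2_term_def)
next
  case (Suc m)
  define a c :: complex where "a = - of_nat (2 * m + 2)" and "c = - of_nat (Suc m) - of_nat k - 1/2"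
  have params: "- 2 * of_nat (Suc m) = a" "- of_nat (Suc m) - of_nat k - 1/2 = c"
      "a + 2 = - 2 * of_nat m" "c + 1 = - of_nat m - of_nat k - 1/2"
    unfolding a_def c_def by (simp_all add: field_simps)
  have two_c: "2 * c = - of_nat (2 * m + 2 * k + 3)"
    unfolding c_def by (simp add: field_simps)
  have v_shift: "(a + \<beta> + 1) / 2 = (1 + \<beta>) / 2 - of_nat (Suc m)"
    unfolding a_def by (simp add: field_simps)
  have "(1 + \<beta>) / 2 - of_nat m = ((1 + \<beta>) / 2 - of_nat (Suc m)) + 1"
    by simp
  then have "(1 + \<beta>) / 2 - of_nat m \<notin> nonpos_ints_c"
    using notin_nonpos_ints_c_add_one[OF Suc.prems] by simp
  note IH = Suc.IH[OF this]
  have recurrence: "(\<Sum>n = 0..2 * m + 2. watson_term a \<beta> c n)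
      = watson_ratio a \<beta> c * (\<Sum>n = 0..2 * m. watson_term (a + 2) \<beta> (c + 1) n)"
    unfolding a_def
  proof (rule watson_sum_recurrence)
    have c_shift_eq_0: "2 * c + of_nat j = 0 \<longleftrightarrow> j = 2 * m + 2 * k + 3" for j
      unfolding two_c by (rule neg_of_nat_add_of_nat_eq_0_iff)
    show "c \<noteq> 0" "2 * c + 1 \<noteq> 0"
      using c_shift_eq_0[of 0] c_shift_eq_0[of 1] by auto
    show "2 * c + of_nat n \<noteq> 0 \<and> 2 * c + 1 + of_nat n \<noteq> 0" if "n \<le> 2 * m + 2" for n
      using c_shift_eq_0[of n] c_shift_eq_0[of "n + 1"] that assms(1) by (auto simp: add_ac)
    show "(- of_nat (2 * m + 2) + \<beta> + 1) / 2 + of_nat n \<noteq> 0" for n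
      using Suc.prems unfolding notin_nonpos_ints_c_iff v_shift[unfolded a_def] by blast
  qed
  have "(\<Sum>n = 0..2 * Suc m. watson_term a \<beta> c n)
      = watson_ratio a \<beta> c
        * (\<Sum>n = 0..2 * m. watson_term (- 2 * of_nat m) \<beta> (- of_nat m - of_nat k - 1/2) n)"
    using recurrence unfolding params(3,4) by simp
  also have "\<dots> = pochhammer (1/2) (Suc m) * pochhammer ((2 + \<beta> + 2 * of_nat k) / 2) (Suc m)
      / (pochhammer ((1 - \<beta>) / 2) (Suc m) * pochhammer (1 + of_nat k) (Suc m))"
    unfolding a_def c_def watson_ratio_neg_even IH pochhammer_Suc
    by (simp only: divide_inverse inverse_mult_distrib ac_simps)
  finally show ?case
    unfolding params(1,2) .
qed

theorem mainTheorem1: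
  fixes m k :: nat and \<beta> :: complex
  assumes "m \<ge> 1" and "k \<ge> 1"
    and "\<beta> \<notin> nonpos_ints_c"
    and "(1 + \<beta>) / 2 - of_nat m \<notin> nonpos_ints_c"
  shows "hyp3F2_trunc (- 2 * of_nat m) \<beta> (- of_nat m - of_nat k - 1/2)
            (- 2 * of_nat m - 2 * of_nat k - 1) ((1 + \<beta>) / 2 - of_nat m) 1 (2 * m)
         = pochhammer (1/2) m * pochhammer ((2 + \<beta> + 2 * of_nat k) / 2) m
           / (pochhammer ((1 - \<beta>) / 2) m * pochhammer (1 + of_nat k) m)"
proof -
  have "- 2 * of_nat m - 2 * of_nat k - 1 = 2 * (- of_nat m - of_nat k - 1/2 :: complex)"
    "(1 + \<beta>) / 2 - of_nat m = (- 2 * of_nat m + \<beta> + 1) / 2"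
    by (simp_all add: field_simps)
  then show ?thesis
    using watson_sum_closed_form[OF assms(2,4)] by (simp only: hyp3F2_trunc_eq_sum_watson_term)
qed

end
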